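(* Let $\Gamma \leq F_d$ be a finitely generated subgroup. Let $g \in F_d$ be an admissible connector for $\mathrm{C}(\Gamma)$ with itself, and let $J$ be the length of the join segment of $g$. Let $\Gamma' := \langle \Gamma, g\Gamma g^{-1}\rangle$. Then for every $R \in \mathbb N$, \[ c_{\Gamma'}(R) \leq \sum_{i=0}^{\lfloor R/(2J) \rfloor} \ \sum_{\substack{\alpha=(\alpha_0,\dots,\alpha_{2i}) \in \mathbb N^{2i+1} \\ \sum_j \alpha_j = R + 2i(|g| - 2J)}} \ \prod_{j=0}^{2i} c_\Gamma(\alpha_j). \]
   Context: $F_d$ is free on $a_1,\dots,a_d$; $|g|$ is the reduced word length, and for $H\le F_d$, $c_H(R) = |\{h\in H \mid |h|\le R\}|$. The Schreier graph $\mathrm{Sch}(H) = H\backslash\mathcal T$ of $H\le F_d$ is the quotient of the directed, $\{a_1,\dots,a_d\}$-labeled Cayley tree $\mathcal T$ of $F_d$, rooted at the image $v_1$ of $1$; a reduced word $b_1\cdots b_k$ (with $b_j\in\{a_i^{\pm1}\}$) defines the path from the root following edges with these labels (traversing an $a_i$-edge backwards for $a_i^{-1}$). The core graph $\mathrm{C}(H)$ is the minimal connected subgraph of $\mathrm{Sch}(H)$ containing the root and all cycles (without backtracking) based at the root. For $g=b_1\cdots b_k$ reduced and finite core graphs $\mathfrak g_1=\mathfrak g_2=\mathrm{C}(\Gamma)$: let $k_1$ be the largest $i\in\{0,\dots,k\}$ such that the path from the root of $\mathfrak g_1$ reading $b_1\cdots b_i$ exists inside $\mathfrak g_1$, and $k_2$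 the largest $i$ such that the path from the root of $\mathfrak g_2$ reading $b_k^{-1}b_{k-1}^{-1}\cdots b_{k-i+1}^{-1}$ exists inside $\mathfrak g_2$. The element $g$ is an admissible connector for $\mathfrak g_1$ with $\mathfrak g_2$ if $k_1+k_2<k$; then the initial segment is $b_1\cdots b_{k_1}$, the terminal segment is (the inverse of) $b_{k-k_2+1}\cdots b_k$, and the join segment is the remaining middle subword $b_{k_1+1}\cdots b_{k-k_2}$, of length $J = k-k_1-k_2$. *)

theory Defs
  imports Main
begin

text \<open>Free group F_d realised as reduced words. A letter (i, False) stands for a_i,
  (i, True) for a_i^-1.\<close>

type_synonym letter = "nat \<times> bool"

definition inv_letter :: "letter \<Rightarrow> letter" where
  "inv_letter x = (fst x, \<not> snd x)"

definition reduced :: "letter list \<Rightarrow> bool" where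
  "reduced w \<longleftrightarrow> (\<forall>j. Suc j < length w \<longrightarrow> w ! Suc j \<noteq> inv_letter (w ! j))"

definition free_group :: "nat \<Rightarrow> letter list set" where
  "free_group d = {w. (\<forall>x\<in>set w. fst x < d) \<and> reduced w}"

primrec red :: "letter list \<Rightarrow> letter list" where
  "red [] = []"
| "red (x # xs) = (case red xs of [] \<Rightarrow> [x]
                    | y # ys \<Rightarrow> (if y = inv_letter x then ys else x # y # ys))"

definition fmult :: "letter list \<Rightarrow> letter list \<Rightarrow> letter list" where
  "fmult u v = red (u @ v)"

definition finv :: "letter list \<Rightarrow> letter list" where
  "finv w = rev (map inv_letter w)"

definition is_subgroup :: "nat \<Rightarrow> letter list set \<Rightarrow> bool" where
  "is_subgroup d H \<longleftrightarrow> H \<subseteq> free_group d \<and> [] \<in> H \<and>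
     (\<forall>u\<in>H. \<forall>v\<in>H. fmult u v \<in> H) \<and> (\<forall>u\<in>H. finv u \<in> H)"

definition generated :: "nat \<Rightarrow> letter list set \<Rightarrow> letter list set" where
  "generated d S = \<Inter>{H. is_subgroup d H \<and> S \<subseteq> H}"

definition fin_gen_subgroup :: "nat \<Rightarrow> letter list set \<Rightarrow> bool" where
  "fin_gen_subgroup d H \<longleftrightarrow> (\<exists>S. finite S \<and> S \<subseteq> free_group d \<and> H = generated d S)"

definition growth :: "letter list set \<Rightarrow> nat \<Rightarrow> nat" where
  "growth H R = card {h\<in>H. length h \<le> R}"

text \<open>Schreier graph Sch(H): vertices are right cosets H w, edges are pairs
  (vertex v, generator index i), the a_i-edge from v to v a_i.\<close>
definition rcoset :: "letter list set \<Rightarrow> letter list \<Rightarrow> letter list set" where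
  "rcoset H w = {fmult h w | h. h \<in> H}"

text \<open>The (undirected) edge traversed at step j of the path from the root reading w.\<close>
definition step_edge :: "letter list set \<Rightarrow> letter list \<Rightarrow> nat \<Rightarrow> letter list set \<times> nat" where
  "step_edge H w j =
     (if snd (w ! j) then (rcoset H (take (Suc j) w), fst (w ! j))
      else (rcoset H (take j w), fst (w ! j)))"

definition path_edges :: "letter list set \<Rightarrow> letter list \<Rightarrow> (letter list set \<times> nat) set" where
  "path_edges H w = {step_edge H w j | j. j < length w}"

text \<open>Core graph C(H): union of all cycles without backtracking based at the root,
  i.e. of the closed paths at the root reading the reduced words h in H.\<close>
definition core_edges :: "letter list set \<Rightarrow> (letter list set \<times> nat) set" where
  "core_edges H = (\<Union>h\<in>H. path_edges H h)"

definition reads_in_core :: "letter list set \<Rightarrow> letter list \<Rightarrow> bool" where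
  "reads_in_core H w \<longleftrightarrow> path_edges H w \<subseteq> core_edges H"

definition k1 :: "letter list set \<Rightarrow> letter list \<Rightarrow> nat" where
  "k1 H g = (GREATEST i. i \<le> length g \<and> reads_in_core H (take i g))"

definition k2 :: "letter list set \<Rightarrow> letter list \<Rightarrow> nat" where
  "k2 H g = (GREATEST i. i \<le> length g \<and> reads_in_core H (take i (finv g)))"

definition admissible_connector :: "letter list set \<Rightarrow> letter list \<Rightarrow> bool" where
  "admissible_connector H g \<longleftrightarrow> k1 H g + k2 H g < length g"

definition join_length :: "letter list set \<Rightarrow> letter list \<Rightarrow> nat" where
  "join_length H g = length g - k1 H g - k2 H g"

end

(*
  Write g = p j q^-1, where p and q are the initial and terminal segments and j is the join
  segment. Every element of <Gamma, g Gamma g^-1> is the free reduction of a word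
  a0 g b1 g^-1 a1 ... g bn g^-1 an with all ai, bi in Gamma, and one may assume bi <> 1 and
  ai <> 1 for 0 < i < n. By maximality of k1 and k2, the edges of the Schreier graph read right
  after p, and right after q from the other end of g, leave the core graph. Hence the reduced
  forms of a0 p, p^-1 ai p, q^-1 bi q and p^-1 an cancel neither among themselves nor against
  the copies of j and j^-1 between them, so the element has length 2nJ plus the lengths of these
  pieces. This gives n <= R / (2J) and sum |ai| + sum |bi| <= R + 2n(|g| - 2J). Enlarging the
  bound for a0 turns these lengths into a composition alpha of R + 2n(|g| - 2J) into 2n + 1
  parts, and the element is determined by the tuple (a0, b1, ..., an) with |ai| <= alpha_i.
*)

theory Submission
  imports Defs
begin

section \<open>Free reduction\<close>

definition cons_cancel :: "letter \<Rightarrow> letter list \<Rightarrow> letter list" where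
  "cons_cancel x w = (case w of [] \<Rightarrow> [x] | y # ys \<Rightarrow> (if y = inv_letter x then ys else x # y # ys))"

lemma red_Cons_eq: "red (x # xs) = cons_cancel x (red xs)"
  by (simp add: cons_cancel_def)

declare red.simps(2)[simp del]

lemma inv_letter_inv_letter[simp]: "inv_letter (inv_letter x) = x"
  by (simp add: inv_letter_def)

lemma inv_letter_eq_iff[simp]: "inv_letter x = inv_letter y \<longleftrightarrow> x = y"
  by (metis inv_letter_inv_letter)

lemma fst_inv_letter[simp]: "fst (inv_letter x) = fst x"
  by (simp add: inv_letter_def)

lemma reduced_Nil[simp]: "reduced []"
  by (simp add: reduced_def)

lemma reduced_singleton[simp]: "reduced [x]"
  by (simp add: reduced_def)

lemma reduced_Cons_iff: "reduced (x # xs) \<longleftrightarrow> reduced xs \<and> (xs \<noteq> [] \<longrightarrow> hd xs \<noteq> inv_letter x)"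
  by (cases xs) (auto simp: reduced_def nth_Cons split: nat.splits)

lemma reduced_append_iff:
  "reduced (u @ v) \<longleftrightarrow> reduced u \<and> reduced v \<and> (u \<noteq> [] \<and> v \<noteq> [] \<longrightarrow> hd v \<noteq> inv_letter (last u))"
  by (induction u) (auto simp: reduced_Cons_iff neq_Nil_conv)

lemma reduced_snoc_iff: "reduced (u @ [y]) \<longleftrightarrow> reduced u \<and> (u \<noteq> [] \<longrightarrow> y \<noteq> inv_letter (last u))"
  by (simp add: reduced_append_iff)

lemma reduced_take: "reduced w \<Longrightarrow> reduced (take n w)"
  by (metis append_take_drop_id reduced_append_iff)

lemma reduced_drop: "reduced w \<Longrightarrow> reduced (drop n w)"
  by (metis append_take_drop_id reduced_append_iff)

lemma reduced_red: "reduced (red w)"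
  by (induction w) (auto simp: red_Cons_eq cons_cancel_def reduced_Cons_iff split: list.splits)

lemma red_reduced: "reduced w \<Longrightarrow> red w = w"
  by (induction w) (auto simp: red_Cons_eq cons_cancel_def reduced_Cons_iff split: list.splits)

lemma red_red[simp]: "red (red w) = red w"
  by (simp add: red_reduced reduced_red)

lemma length_red_le: "length (red w) \<le> length w"
  by (induction w) (auto simp: red_Cons_eq cons_cancel_def split: list.splits)

lemma set_red_subset: "set (red w) \<subseteq> set w"
  by (induction w) (auto simp: red_Cons_eq cons_cancel_def split: list.splits)

lemma red_append_red_right: "red (u @ red v) = red (u @ v)"
  by (induction u) (simp_all add: red_Cons_eq)

lemma cons_cancel_cons_cancel_inv: "reduced v \<Longrightarrow> cons_cancel x (cons_cancel (inv_letter x) v) = v"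
  by (cases v) (auto simp: cons_cancel_def reduced_Cons_iff split: list.splits)

lemma red_cons_cancel_append: "red (cons_cancel x w @ v) = cons_cancel x (red (w @ v))"
proof (cases w)
  case (Cons y w')
  show ?thesis
  proof (cases "y = inv_letter x")
    case True
    then have "cons_cancel x (red (w @ v)) = red (w' @ v)"
      using Cons by (simp add: red_Cons_eq cons_cancel_cons_cancel_inv reduced_red)
    then show ?thesis using Cons True by (simp add: cons_cancel_def)
  qed (simp add: Cons cons_cancel_def red_Cons_eq)
qed (simp add: cons_cancel_def red_Cons_eq)

lemma red_append_red_left: "red (red u @ v) = red (u @ v)"
  by (induction u) (simp_all add: red_Cons_eq red_cons_cancel_append)

lemma red_append_red_mid: "red (u @ red v @ w) = red (u @ v @ w)"
  by (metis red_append_red_left red_append_red_right)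

lemma red_inv_letter_Cons_Cons[simp]: "red (inv_letter x # x # w) = red w"
  using cons_cancel_cons_cancel_inv[OF reduced_red, of "inv_letter x" w] by (simp add: red_Cons_eq)

lemma finv_Nil[simp]: "finv [] = []"
  by (simp add: finv_def)

lemma finv_Cons: "finv (x # w) = finv w @ [inv_letter x]"
  by (simp add: finv_def)

lemma finv_append[simp]: "finv (u @ v) = finv v @ finv u"
  by (simp add: finv_def)

lemma finv_finv[simp]: "finv (finv w) = w"
  by (simp add: finv_def rev_map comp_def)

lemma length_finv[simp]: "length (finv w) = length w"
  by (simp add: finv_def)

lemma finv_eq_Nil_iff[simp]: "finv w = [] \<longleftrightarrow> w = []"
  by (simp add: finv_def)

lemma hd_finv: "w \<noteq> [] \<Longrightarrow> hd (finv w) = inv_letter (last w)"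
  by (simp add: finv_def hd_rev last_map)

lemma last_finv: "w \<noteq> [] \<Longrightarrow> last (finv w) = inv_letter (hd w)"
  by (simp add: finv_def last_rev hd_map)

lemma set_finv: "set (finv w) = inv_letter ` set w"
  by (simp add: finv_def)

lemma finv_take_finv: "finv (take l (finv w)) = drop (length w - l) w"
  by (simp add: finv_def take_rev drop_map rev_map[symmetric] comp_def)

lemma reduced_finv_iff[simp]: "reduced (finv w) \<longleftrightarrow> reduced w"
proof -
  have "reduced w \<Longrightarrow> reduced (finv w)" for w
    by (induction w) (auto simp: finv_Cons reduced_snoc_iff last_finv reduced_Cons_iff)
  then show ?thesis by (metis finv_finv)
qed

lemma red_snoc_reduced:
  "reduced u \<Longrightarrow> red (u @ [y]) = (if u \<noteq> [] \<and> last u = inv_letter y then butlast u else u @ [y])"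
proof (induction u)
  case (Cons x u)
  then have "reduced u" by (simp add: reduced_Cons_iff)
  with Cons show ?case
    by (cases u rule: rev_cases)
      (auto simp: red_Cons_eq cons_cancel_def reduced_Cons_iff split: list.splits)
qed (simp add: red_Cons_eq cons_cancel_def)

lemma inv_letter_eq_swap: "inv_letter x = y \<longleftrightarrow> x = inv_letter y"
  by auto

lemma red_finv_snoc:
  assumes "reduced v"
  shows "red (finv v @ [inv_letter x]) = finv (cons_cancel x v)"
proof -
  have "red (finv v @ [inv_letter x])
      = (if v \<noteq> [] \<and> last (finv v) = x then butlast (finv v) else finv v @ [inv_letter x])"
    using assms by (simp add: red_snoc_reduced)
  then show ?thesis
    by (cases v) (auto simp: cons_cancel_def finv_Cons inv_letter_eq_swap)
qed

lemma red_finv: "red (finv w) = finv (red w)"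
proof (induction w)
  case (Cons x w)
  have "red (finv (x # w)) = red (finv (red w) @ [inv_letter x])"
    by (simp add: finv_Cons Cons.IH[symmetric] red_append_red_left)
  also have "\<dots> = finv (red (x # w))"
    by (simp add: red_finv_snoc reduced_red red_Cons_eq)
  finally show ?case .
qed simp

lemma red_finv_append_cancel: "red (finv u @ u @ v) = red v"
proof (induction u)
  case (Cons x u)
  have "red (finv (x # u) @ (x # u) @ v) = red (finv u @ red (inv_letter x # x # u @ v))"
    by (simp only: red_append_red_right) (simp add: finv_Cons)
  also have "\<dots> = red (finv u @ red (u @ v))"
    by simp
  finally show ?case using Cons.IH by (simp add: red_append_red_right)
qed simp

lemma red_append_finv_cancel: "red (u @ finv u @ v) = red v"
  using red_finv_append_cancel[of "finv u" v] by simp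

lemma red_append_append_finv: "red (w @ u @ finv u) = red w"
  by (metis append.right_neutral red_append_red_right red_append_finv_cancel)

lemma red_conj_conj_inv: "red (u @ red (finv u @ w @ u) @ finv u) = red w"
  by (simp add: red_append_red_mid red_append_finv_cancel red_append_append_finv)

lemma red_append_of_reduced:
  assumes "reduced u" "reduced v"
  shows "\<exists>m. m \<le> length u \<and> m \<le> length v \<and> red (u @ v) = take (length u - m) u @ drop m v"
  using assms(1)
proof (induction u)
  case Nil then show ?case using assms(2) by (auto simp: red_reduced)
next
  case (Cons x u)
  then have ru: "reduced u" and h: "u \<noteq> [] \<Longrightarrow> hd u \<noteq> inv_letter x" by (auto simp: reduced_Cons_iff)
  obtain m where m: "m \<le> length u" "m \<le> length v" "red (u @ v) = take (length u - m) u @ drop m v"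
    using Cons.IH[OF ru] by blast
  show ?case
  proof (cases "m < length u")
    case True
    then obtain z zs where u: "u = z # zs" and "m \<le> length zs"
      by (cases u) auto
    then have "red ((x # u) @ v) = x # take (length u - m) u @ drop m v"
      using m(3) h by (simp add: red_Cons_eq cons_cancel_def Suc_diff_le)
    then show ?thesis using m True by (intro exI[of _ m]) (auto simp: Suc_diff_le)
  next
    case False
    then have mu: "m = length u" using m(1) by simp
    have r: "red ((x # u) @ v) = cons_cancel x (drop m v)" using m(3) mu by (simp add: red_Cons_eq)
    show ?thesis
    proof (cases "drop m v \<noteq> [] \<and> hd (drop m v) = inv_letter x")
      case True
      then have "cons_cancel x (drop m v) = drop (Suc m) v"
        by (cases "drop m v") (auto simp: cons_cancel_def drop_Suc drop_tl)
      then show ?thesis using r mu True by (intro exI[of _ "Suc m"]) auto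
    next
      case False
      then have "cons_cancel x (drop m v) = x # drop m v"
        by (cases "drop m v") (auto simp: cons_cancel_def)
      then show ?thesis using r mu m by (intro exI[of _ m]) auto
    qed
  qed
qed

lemma take_red_append_of_reduced:
  assumes "reduced u" "reduced v" "n + length v \<le> length u"
  shows "take n (red (u @ v)) = take n u"
proof -
  obtain m where "m \<le> length v" "red (u @ v) = take (length u - m) u @ drop m v"
    using red_append_of_reduced[OF assms(1,2)] by blast
  moreover from this(1) have "n \<le> length u - m"
    using assms(3) by linarith
  ultimately show ?thesis by (simp add: take_append)
qed

lemma reduced_concat_replicate:
  "reduced c \<Longrightarrow> c \<noteq> [] \<Longrightarrow> last c \<noteq> inv_letter (hd c) \<Longrightarrow> reduced (concat (replicate n c))"
proof (induction n)
  case (Suc n)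
  then show ?case by (cases n) (auto simp: reduced_append_iff)
qed simp

lemma length_concat_replicate: "length (concat (replicate n w)) = n * length w"
  by (induction n) auto

section \<open>Subgroups, cosets and the core graph\<close>

lemma subgroup_reduced: "is_subgroup d H \<Longrightarrow> h \<in> H \<Longrightarrow> reduced h"
  by (auto simp: is_subgroup_def free_group_def)

lemma subgroup_red_eq: "is_subgroup d H \<Longrightarrow> h \<in> H \<Longrightarrow> red h = h"
  by (simp add: subgroup_reduced red_reduced)

lemma subgroup_Nil: "is_subgroup d H \<Longrightarrow> [] \<in> H"
  by (simp add: is_subgroup_def)

lemma subgroup_red_append: "is_subgroup d H \<Longrightarrow> a \<in> H \<Longrightarrow> b \<in> H \<Longrightarrow> red (a @ b) \<in> H"
  by (auto simp: is_subgroup_def fmult_def)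

lemma subgroup_finv: "is_subgroup d H \<Longrightarrow> a \<in> H \<Longrightarrow> finv a \<in> H"
  by (auto simp: is_subgroup_def)

lemma finite_subgroup_ball:
  assumes "is_subgroup d H"
  shows "finite {h \<in> H. length h \<le> k}"
proof (rule finite_subset)
  show "{h \<in> H. length h \<le> k} \<subseteq> {w. set w \<subseteq> {..<d} \<times> UNIV \<and> length w \<le> k}"
    using assms by (force simp: is_subgroup_def free_group_def)
  show "finite {w. set w \<subseteq> {..<d} \<times> (UNIV :: bool set) \<and> length w \<le> k}"
    by (rule finite_lists_length_le) simp
qed

lemma subgroup_red_conj_power:
  assumes "is_subgroup d H" and "red (p @ c @ finv p) \<in> H"
  shows "red (p @ concat (replicate n c) @ finv p) \<in> H"
proof (induction n)
  case 0
  then show ?case using red_append_finv_cancel[of p "[]"] subgroup_Nil[OF assms(1)] by simp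
next
  case (Suc n)
  let ?C = "concat (replicate n c)"
  have "red (p @ concat (replicate (Suc n) c) @ finv p) = red ((p @ c) @ red (finv p @ p @ ?C @ finv p))"
    using red_append_red_right[of "p @ c" "?C @ finv p"] by (simp add: red_finv_append_cancel)
  also have "\<dots> = red ((p @ c @ finv p) @ (p @ ?C @ finv p))"
    using red_append_red_right[of "p @ c" "finv p @ p @ ?C @ finv p"] by simp
  also have "\<dots> = red (red (p @ c @ finv p) @ red (p @ ?C @ finv p))"
    by (simp only: red_append_red_left red_append_red_right)
  finally show ?case using subgroup_red_append[OF assms(1) assms(2) Suc] by simp
qed

text \<open>If c starts with x, either p c p\<inverse> is already reduced or, c being cyclically reduced,
  a high enough power of c keeps p x as a prefix after conjugation.\<close>
lemma subgroup_element_with_prefix: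
  assumes sg: "is_subgroup d H" and conj: "red (p @ c @ finv p) \<in> H"
    and px: "reduced (p @ [x])" and rc: "reduced c" and cn: "c \<noteq> []" and hc: "hd c = x"
  shows "\<exists>h\<in>H. take (Suc (length p)) h = p @ [x]"
proof -
  have rp: "reduced p" and lpx: "p \<noteq> [] \<Longrightarrow> x \<noteq> inv_letter (last p)"
    using px by (auto simp: reduced_snoc_iff)
  show ?thesis
  proof (cases "last c = inv_letter x")
    case True
    have "reduced (p @ c @ finv p)"
      using rp rc cn hc True lpx by (auto simp: reduced_append_iff hd_finv)
    moreover have "take (Suc (length p)) (p @ c @ finv p) = p @ [x]"
      using cn hc by (cases c) auto
    ultimately show ?thesis
      using conj by (metis red_reduced)
  next
    case False
    define n where "n = Suc (length p)"
    define C where "C = concat (replicate n c)"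
    have rC: "reduced C"
      unfolding C_def using False hc by (intro reduced_concat_replicate[OF rc cn]) simp
    have C_eq: "C = c @ concat (replicate (length p) c)"
      by (simp add: C_def n_def)
    have "n * 1 \<le> n * length c"
      using cn by (intro mult_le_mono2) (simp add: Suc_le_eq)
    then have "n \<le> length C"
      by (simp only: C_def length_concat_replicate mult_1_right)
    then have "take n (red ((p @ C) @ finv p)) = take n (p @ C)"
      using rp rC C_eq cn hc lpx
      by (intro take_red_append_of_reduced) (auto simp: reduced_append_iff n_def)
    also have "\<dots> = p @ [x]"
      using C_eq cn hc by (cases c) (auto simp: n_def)
    finally show ?thesis
      using subgroup_red_conj_power[OF sg conj, of n] by (auto simp: C_def n_def)
  qed
qed

lemma length_le_red_conj:
  "is_subgroup d H \<Longrightarrow> a \<in> H \<Longrightarrow> length a \<le> length (red (finv p @ a @ p)) + 2 * length p"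
  using length_red_le[of "p @ red (finv p @ a @ p) @ finv p"]
  by (simp add: red_conj_conj_inv subgroup_red_eq)

lemma length_le_red_append:
  "is_subgroup d H \<Longrightarrow> a \<in> H \<Longrightarrow> length a \<le> length (red (a @ p)) + length p"
  using length_red_le[of "red (a @ p) @ finv p"]
  by (simp add: red_append_red_left red_append_append_finv subgroup_red_eq)

lemma length_le_red_finv_append:
  "is_subgroup d H \<Longrightarrow> a \<in> H \<Longrightarrow> length a \<le> length (red (finv p @ a)) + length p"
  using length_red_le[of "p @ red (finv p @ a)"]
  by (simp add: red_append_red_right red_append_finv_cancel subgroup_red_eq)

lemma red_conj_neq_Nil:
  "is_subgroup d H \<Longrightarrow> a \<in> H \<Longrightarrow> a \<noteq> [] \<Longrightarrow> red (finv p @ a @ p) \<noteq> []"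
  using red_conj_conj_inv[of p a] red_append_finv_cancel[of p "[]"] subgroup_red_eq[of d H a] by auto

lemma rcoset_red: "rcoset H (red w) = rcoset H w"
  by (simp add: rcoset_def fmult_def red_append_red_right)

lemma rcoset_subgroup_append:
  assumes sg: "is_subgroup d H" and "\<gamma> \<in> H"
  shows "rcoset H (\<gamma> @ w) = rcoset H w"
proof
  show "rcoset H (\<gamma> @ w) \<subseteq> rcoset H w"
  proof
    fix z assume "z \<in> rcoset H (\<gamma> @ w)"
    then obtain h where "h \<in> H" "z = red (red (h @ \<gamma>) @ w)"
      by (auto simp: rcoset_def fmult_def red_append_red_left)
    then show "z \<in> rcoset H w"
      using subgroup_red_append[OF sg _ \<open>\<gamma> \<in> H\<close>] by (auto simp: rcoset_def fmult_def)
  qed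
  show "rcoset H w \<subseteq> rcoset H (\<gamma> @ w)"
  proof
    fix z assume "z \<in> rcoset H w"
    then obtain h where "h \<in> H" "z = red (h @ w)"
      by (auto simp: rcoset_def fmult_def)
    moreover have "red (h @ w) = red (red (h @ finv \<gamma>) @ \<gamma> @ w)"
      using red_append_red_right[of h "finv \<gamma> @ \<gamma> @ w"]
      by (simp add: red_append_red_left red_finv_append_cancel red_append_red_right)
    ultimately show "z \<in> rcoset H (\<gamma> @ w)"
      using subgroup_red_append[OF sg _ subgroup_finv[OF sg \<open>\<gamma> \<in> H\<close>]]
      by (auto simp: rcoset_def fmult_def)
  qed
qed

lemma rcoset_butlast_red_subgroup_append:
  assumes sg: "is_subgroup d H" and "\<gamma> \<in> H"
    and ne: "red (\<gamma> @ p) \<noteq> []" and last: "last (red (\<gamma> @ p)) = inv_letter x"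
  shows "rcoset H (butlast (red (\<gamma> @ p))) = rcoset H (p @ [x])"
proof -
  let ?c = "red (\<gamma> @ p)"
  have "?c = butlast ?c @ [inv_letter x]"
    using append_butlast_last_id[OF ne] last by simp
  then have "red (?c @ [x]) = red (butlast ?c @ [inv_letter x] @ finv [inv_letter x])"
    by (metis append_assoc finv_Cons finv_Nil append_Nil inv_letter_inv_letter)
  also have "\<dots> = red (butlast ?c)"
    by (rule red_append_append_finv)
  also have "\<dots> = butlast ?c"
    by (simp add: butlast_conv_take red_reduced reduced_take reduced_red)
  finally have "butlast ?c = red (?c @ [x])" ..
  then show ?thesis
    using rcoset_subgroup_append[OF sg \<open>\<gamma> \<in> H\<close>] by (simp add: rcoset_red red_append_red_left)
qed

lemma step_edge_take: "j < m \<Longrightarrow> step_edge H (take m w) j = step_edge H w j"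
  by (simp add: step_edge_def min_def)

lemma step_edge_cong: "take (Suc j) w = take (Suc j) w' \<Longrightarrow> step_edge H w j = step_edge H w' j"
  by (metis lessI step_edge_take)

lemma step_edge_in_core_edges: "h \<in> H \<Longrightarrow> j < length h \<Longrightarrow> step_edge H h j \<in> core_edges H"
  by (auto simp: core_edges_def path_edges_def)

lemma step_edge_reverse:
  assumes "w ! i = inv_letter (v ! j)"
    and "rcoset H (take i w) = rcoset H (take (Suc j) v)"
    and "rcoset H (take (Suc i) w) = rcoset H (take j v)"
  shows "step_edge H w i = step_edge H v j"
  using assms by (cases "v ! j") (auto simp: step_edge_def inv_letter_def)

lemma path_edges_take_Suc:
  assumes "k < length w"
  shows "path_edges H (take (Suc k) w) \<subseteq> insert (step_edge H w k) (path_edges H (take k w))"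
proof
  fix e assume "e \<in> path_edges H (take (Suc k) w)"
  then obtain j where j: "j < Suc k" "e = step_edge H w j"
    by (auto simp: path_edges_def step_edge_take)
  show "e \<in> insert (step_edge H w k) (path_edges H (take k w))"
  proof (cases "j < k")
    case True
    then have "e = step_edge H (take k w) j" using j by (simp add: step_edge_take)
    then show ?thesis using True assms by (auto simp: path_edges_def)
  next
    case False
    with j show ?thesis by (simp add: less_Suc_eq)
  qed
qed

lemma reads_in_core_k1: "reads_in_core H (take (k1 H g) g)"
proof -
  let ?P = "\<lambda>i. i \<le> length g \<and> reads_in_core H (take i g)"
  have "?P 0"
    by (simp add: reads_in_core_def path_edges_def)
  then have "?P (k1 H g)"
    unfolding k1_def by (rule GreatestI_nat[of ?P 0 "length g"]) simp
  then show ?thesis by simp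
qed

lemma step_edge_k1_notin_core_edges:
  assumes "k1 H g < length g"
  shows "step_edge H g (k1 H g) \<notin> core_edges H"
proof
  assume "step_edge H g (k1 H g) \<in> core_edges H"
  then have "reads_in_core H (take (Suc (k1 H g)) g)"
    using reads_in_core_k1[of H g] path_edges_take_Suc[OF assms, of H] by (auto simp: reads_in_core_def)
  then have "Suc (k1 H g) \<le> k1 H g"
    using assms unfolding k1_def by (intro Greatest_le_nat[where b = "length g"]) simp_all
  then show False by simp
qed

lemma k2_eq_k1_finv: "k2 H g = k1 H (finv g)"
  by (simp add: k1_def k2_def)

lemma take_Suc_k1_neq:
  assumes "h \<in> H" "k1 H g < length g"
  shows "take (Suc (k1 H g)) h \<noteq> take (Suc (k1 H g)) g"
proof
  assume eq: "take (Suc (k1 H g)) h = take (Suc (k1 H g)) g"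
  then have "length (take (Suc (k1 H g)) h) = Suc (k1 H g)"
    using assms(2) by simp
  then have "k1 H g < length h"
    by simp
  then have "step_edge H g (k1 H g) \<in> core_edges H"
    using step_edge_cong[OF eq] step_edge_in_core_edges[OF assms(1)] by metis
  with step_edge_k1_notin_core_edges[OF assms(2)] show False by simp
qed

section \<open>No cancellation next to the join segment\<close>

abbreviation initial_segment :: "letter list set \<Rightarrow> letter list \<Rightarrow> letter list" where
  "initial_segment H g \<equiv> take (k1 H g) g"

lemma hd_red_conj_initial_segment_neq:
  assumes sg: "is_subgroup d H" and rg: "reduced g" and lt: "k1 H g < length g" and "\<gamma> \<in> H"
    and ne: "red (finv (initial_segment H g) @ \<gamma> @ initial_segment H g) \<noteq> []"
  shows "hd (red (finv (initial_segment H g) @ \<gamma> @ initial_segment H g)) \<noteq> g ! k1 H g"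
proof
  define k where "k = k1 H g"
  define p where "p = take k g"
  define x where "x = g ! k"
  define c where "c = red (finv p @ \<gamma> @ p)"
  assume "hd (red (finv (initial_segment H g) @ \<gamma> @ initial_segment H g)) = g ! k1 H g"
  then have hc: "hd c = x" and cn: "c \<noteq> []"
    using ne by (simp_all add: c_def p_def x_def k_def)
  have lp: "length p = k"
    using lt by (simp add: p_def k_def)
  have tk: "take (Suc k) g = p @ [x]"
    using lt by (simp add: p_def x_def k_def take_Suc_conv_app_nth)
  have "red (p @ c @ finv p) \<in> H"
    using red_conj_conj_inv[of p \<gamma>] subgroup_red_eq[OF sg \<open>\<gamma> \<in> H\<close>] \<open>\<gamma> \<in> H\<close> by (simp add: c_def)
  moreover have "reduced c"
    by (simp add: c_def reduced_red)
  ultimately obtain h where "h \<in> H" "take (Suc k) h = p @ [x]"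
    using subgroup_element_with_prefix[OF sg _ _ _ cn hc] reduced_take[OF rg, of "Suc k"] tk lp
    by auto
  then show False
    using take_Suc_k1_neq[OF _ lt] tk by (auto simp: k_def)
qed

lemma last_red_conj_initial_segment_neq:
  assumes sg: "is_subgroup d H" and rg: "reduced g" and lt: "k1 H g < length g" and "\<gamma> \<in> H"
    and ne: "red (finv (initial_segment H g) @ \<gamma> @ initial_segment H g) \<noteq> []"
  shows "last (red (finv (initial_segment H g) @ \<gamma> @ initial_segment H g)) \<noteq> inv_letter (g ! k1 H g)"
proof -
  let ?p = "initial_segment H g"
  have inv: "finv (red (finv ?p @ \<gamma> @ ?p)) = red (finv ?p @ finv \<gamma> @ ?p)"
    by (simp add: red_finv[symmetric])
  have "hd (finv (red (finv ?p @ \<gamma> @ ?p))) \<noteq> g ! k1 H g"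
    unfolding inv using ne inv
    by (intro hd_red_conj_initial_segment_neq[OF sg rg lt subgroup_finv[OF sg \<open>\<gamma> \<in> H\<close>]])
      (metis finv_eq_Nil_iff)
  then show ?thesis
    using ne by (auto simp: hd_finv)
qed

text \<open>Otherwise the closed path of \<gamma> would end by traversing backwards the edge read right
  after the initial segment.\<close>
lemma last_red_append_initial_segment_neq:
  assumes sg: "is_subgroup d H" and rg: "reduced g" and lt: "k1 H g < length g" and "\<gamma> \<in> H"
    and ne: "red (\<gamma> @ initial_segment H g) \<noteq> []"
  shows "last (red (\<gamma> @ initial_segment H g)) \<noteq> inv_letter (g ! k1 H g)"
proof
  define k where "k = k1 H g"
  define p where "p = take k g"
  define x where "x = g ! k"
  define c where "c = red (\<gamma> @ p)"
  assume "last (red (\<gamma> @ initial_segment H g)) = inv_letter (g ! k1 H g)"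
  then have lc: "last c = inv_letter x" and cn: "c \<noteq> []"
    using ne by (simp_all add: c_def p_def x_def k_def)
  have tk: "take (Suc k) g = p @ [x]" and tk': "take k g = p"
    using lt by (simp_all add: p_def x_def k_def take_Suc_conv_app_nth)
  then have "reduced (p @ [x])"
    using reduced_take[OF rg, of "Suc k"] by simp
  then have "reduced (c @ finv p)"
    using lc cn by (auto simp: reduced_append_iff reduced_snoc_iff hd_finv c_def reduced_red)
  moreover have "red (c @ finv p) = \<gamma>"
    using red_append_append_finv[of \<gamma> p] subgroup_red_eq[OF sg \<open>\<gamma> \<in> H\<close>]
    by (simp add: c_def red_append_red_left)
  ultimately have \<gamma>_eq: "\<gamma> = c @ finv p"
    by (simp add: red_reduced)
  have "rcoset H c = rcoset H p"
    by (simp add: c_def rcoset_red rcoset_subgroup_append[OF sg \<open>\<gamma> \<in> H\<close>])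
  moreover have "rcoset H (butlast c) = rcoset H (p @ [x])"
    using rcoset_butlast_red_subgroup_append[OF sg \<open>\<gamma> \<in> H\<close> cn[unfolded c_def] lc[unfolded c_def]]
    by (simp add: c_def)
  moreover have "\<gamma> ! (length c - 1) = inv_letter x" "take (length c - 1) \<gamma> = butlast c"
    "take (Suc (length c - 1)) \<gamma> = c"
    using cn lc \<gamma>_eq by (simp_all add: nth_append last_conv_nth butlast_conv_take)
  ultimately have "step_edge H \<gamma> (length c - 1) = step_edge H g k"
    using tk tk' lt by (intro step_edge_reverse) (simp_all add: x_def k_def)
  moreover have "length c - 1 < length \<gamma>"
    using cn by (cases c) (simp_all add: \<gamma>_eq)
  ultimately have "step_edge H g (k1 H g) \<in> core_edges H"
    using step_edge_in_core_edges[OF \<open>\<gamma> \<in> H\<close>] by (metis k_def)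
  with step_edge_k1_notin_core_edges[OF lt] show False ..
qed

lemma hd_red_finv_initial_segment_append_neq:
  assumes sg: "is_subgroup d H" and rg: "reduced g" and lt: "k1 H g < length g" and "\<gamma> \<in> H"
    and ne: "red (finv (initial_segment H g) @ \<gamma>) \<noteq> []"
  shows "hd (red (finv (initial_segment H g) @ \<gamma>)) \<noteq> g ! k1 H g"
proof -
  let ?p = "initial_segment H g"
  have inv: "finv (red (finv ?p @ \<gamma>)) = red (finv \<gamma> @ ?p)"
    by (simp add: red_finv[symmetric])
  have "last (finv (red (finv ?p @ \<gamma>))) \<noteq> inv_letter (g ! k1 H g)"
    unfolding inv using ne inv
    by (intro last_red_append_initial_segment_neq[OF sg rg lt subgroup_finv[OF sg \<open>\<gamma> \<in> H\<close>]])
      (metis finv_eq_Nil_iff)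
  then show ?thesis
    using ne by (auto simp: last_finv)
qed

section \<open>Normal forms in the subgroup generated by H and g H g\<inverse>\<close>

definition alt_word :: "letter list \<Rightarrow> letter list \<Rightarrow> (letter list \<times> letter list) list \<Rightarrow> letter list" where
  "alt_word g a ps = a @ concat (map (\<lambda>(b, c). g @ b @ finv g @ c) ps)"

lemma alt_word_Nil[simp]: "alt_word g a [] = a"
  by (simp add: alt_word_def)

lemma alt_word_Cons: "alt_word g a ((b, c) # ps) = a @ g @ b @ finv g @ alt_word g c ps"
  by (simp add: alt_word_def)

definition blocks_in :: "letter list set \<Rightarrow> letter list \<Rightarrow> (letter list \<times> letter list) list \<Rightarrow> bool" where
  "blocks_in H a ps \<longleftrightarrow> a \<in> H \<and> (\<forall>(b, c) \<in> set ps. b \<in> H \<and> c \<in> H)"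

lemma blocks_in_Nil[simp]: "blocks_in H a [] \<longleftrightarrow> a \<in> H"
  by (simp add: blocks_in_def)

lemma blocks_in_Cons[simp]: "blocks_in H a ((b, c) # ps) \<longleftrightarrow> a \<in> H \<and> b \<in> H \<and> blocks_in H c ps"
  by (auto simp: blocks_in_def)

lemma blocks_in_replace_first: "blocks_in H a ps \<Longrightarrow> a' \<in> H \<Longrightarrow> blocks_in H a' ps"
  by (simp add: blocks_in_def)

definition alt_words :: "letter list set \<Rightarrow> letter list \<Rightarrow> letter list set" where
  "alt_words H g = {red (alt_word g a ps) | a ps. blocks_in H a ps}"

lemma red_alt_word_append:
  assumes sg: "is_subgroup d H"
  shows "blocks_in H a ps \<Longrightarrow> blocks_in H b qs \<Longrightarrow>
    \<exists>c rs. blocks_in H c rs \<and> red (alt_word g a ps @ alt_word g b qs) = red (alt_word g c rs)"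
proof (induction ps arbitrary: a)
  case Nil
  have "red (alt_word g a [] @ alt_word g b qs) = red (alt_word g (red (a @ b)) qs)"
    by (simp add: alt_word_def red_append_red_left)
  moreover have "blocks_in H (red (a @ b)) qs"
    using Nil subgroup_red_append[OF sg] by (auto intro: blocks_in_replace_first simp: blocks_in_def)
  ultimately show ?case by blast
next
  case (Cons bc ps)
  obtain u v where bc: "bc = (u, v)" by (cases bc)
  with Cons.prems obtain c rs where crs: "blocks_in H c rs"
      "red (alt_word g v ps @ alt_word g b qs) = red (alt_word g c rs)"
    using Cons.IH by fastforce
  have "red (alt_word g a (bc # ps) @ alt_word g b qs)
      = red ((a @ g @ u @ finv g) @ red (alt_word g v ps @ alt_word g b qs))"
    by (simp only: red_append_red_right) (simp add: bc alt_word_Cons)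
  also have "\<dots> = red (alt_word g a ((u, c) # rs))"
    by (simp only: crs(2) red_append_red_right) (simp add: alt_word_Cons)
  finally show ?case
    using crs(1) Cons.prems bc by (intro exI[of _ a] exI[of _ "(u, c) # rs"]) simp
qed

lemma red_finv_alt_word:
  assumes sg: "is_subgroup d H"
  shows "blocks_in H a ps \<Longrightarrow>
    \<exists>c rs. blocks_in H c rs \<and> red (finv (alt_word g a ps)) = red (alt_word g c rs)"
proof (induction ps arbitrary: a)
  case Nil
  then show ?case
    using subgroup_finv[OF sg] by (intro exI[of _ "finv a"] exI[of _ "[]"]) auto
next
  case (Cons bc ps)
  obtain u v where bc: "bc = (u, v)" by (cases bc)
  with Cons.prems obtain c rs where crs: "blocks_in H c rs"
      "red (finv (alt_word g v ps)) = red (alt_word g c rs)"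
    using Cons.IH by fastforce
  have last_block: "blocks_in H [] [(finv u, finv a)]"
    using Cons.prems bc subgroup_finv[OF sg] subgroup_Nil[OF sg] by simp
  obtain c' rs' where c': "blocks_in H c' rs'"
      "red (alt_word g c rs @ alt_word g [] [(finv u, finv a)]) = red (alt_word g c' rs')"
    using red_alt_word_append[OF sg crs(1) last_block] by blast
  have "red (finv (alt_word g a (bc # ps)))
      = red (red (finv (alt_word g v ps)) @ alt_word g [] [(finv u, finv a)])"
    by (simp add: bc alt_word_Cons red_append_red_left)
  also have "\<dots> = red (alt_word g c' rs')"
    by (simp only: crs(2) red_append_red_left c'(2))
  finally show ?case
    using c'(1) by blast
qed

lemma alt_word_letters_less:
  "blocks_in H a ps \<Longrightarrow> H \<subseteq> free_group d \<Longrightarrow> g \<in> free_group d \<Longrightarrow> x \<in> set (alt_word g a ps) \<Longrightarrow> fst x < d"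
  by (induction ps arbitrary: a) (fastforce simp: alt_word_Cons free_group_def set_finv subset_iff)+

lemma alt_words_subgroup:
  assumes sg: "is_subgroup d H" and gF: "g \<in> free_group d"
  shows "is_subgroup d (alt_words H g)"
  unfolding is_subgroup_def
proof (intro conjI ballI)
  show "alt_words H g \<subseteq> free_group d"
  proof
    fix t assume "t \<in> alt_words H g"
    then obtain a ps where t: "t = red (alt_word g a ps)" "blocks_in H a ps"
      by (auto simp: alt_words_def)
    have "\<forall>x \<in> set (alt_word g a ps). fst x < d"
      using alt_word_letters_less[OF t(2)] sg gF by (auto simp: is_subgroup_def)
    then show "t \<in> free_group d"
      using t set_red_subset[of "alt_word g a ps"] reduced_red by (auto simp: free_group_def)
  qed
  show "[] \<in> alt_words H g"
    unfolding alt_words_def using subgroup_Nil[OF sg] by (intro CollectI exI[of _ "[]"]) auto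
next
  fix u v assume "u \<in> alt_words H g" "v \<in> alt_words H g"
  then obtain a ps b qs where uv: "u = red (alt_word g a ps)" "blocks_in H a ps"
      "v = red (alt_word g b qs)" "blocks_in H b qs"
    by (auto simp: alt_words_def)
  obtain c rs where "blocks_in H c rs" "red (alt_word g a ps @ alt_word g b qs) = red (alt_word g c rs)"
    using red_alt_word_append[OF sg uv(2,4)] by blast
  then show "fmult u v \<in> alt_words H g"
    using uv by (auto simp: alt_words_def fmult_def red_append_red_left red_append_red_right)
next
  fix u assume "u \<in> alt_words H g"
  then obtain a ps where uv: "u = red (alt_word g a ps)" "blocks_in H a ps"
    by (auto simp: alt_words_def)
  obtain c rs where "blocks_in H c rs" "red (finv (alt_word g a ps)) = red (alt_word g c rs)"
    using red_finv_alt_word[OF sg uv(2)] by blast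
  then show "finv u \<in> alt_words H g"
    using uv by (auto simp: alt_words_def red_finv[symmetric])
qed

lemma generated_conj_subset_alt_words:
  assumes sg: "is_subgroup d H" and gF: "g \<in> free_group d"
  shows "generated d (H \<union> {fmult (fmult g h) (finv g) | h. h \<in> H}) \<subseteq> alt_words H g"
proof -
  have "h \<in> alt_words H g" if "h \<in> H" for h
    unfolding alt_words_def using that subgroup_red_eq[OF sg]
    by (intro CollectI exI[of _ h] exI[of _ "[]"]) auto
  moreover have "fmult (fmult g h) (finv g) \<in> alt_words H g" if "h \<in> H" for h
    unfolding alt_words_def using that subgroup_Nil[OF sg]
    by (intro CollectI exI[of _ "[]"] exI[of _ "[(h, [])]"])
      (simp add: fmult_def red_append_red_left alt_word_Cons)
  ultimately show ?thesis
    unfolding generated_def using alt_words_subgroup[OF sg gF] by blast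
qed

fun nontrivial_blocks :: "(letter list \<times> letter list) list \<Rightarrow> bool" where
  "nontrivial_blocks [] \<longleftrightarrow> True"
| "nontrivial_blocks ((b, c) # ps) \<longleftrightarrow> b \<noteq> [] \<and> (ps \<noteq> [] \<longrightarrow> c \<noteq> []) \<and> nontrivial_blocks ps"

lemma red_alt_word_trivial_block:
  assumes "red b = []"
  shows "red (alt_word g a ((b, c) # ps)) = red (alt_word g (red (a @ c)) ps)"
proof -
  have "red (alt_word g a ((b, c) # ps)) = red (a @ g @ red b @ finv g @ alt_word g c ps)"
    by (simp add: alt_word_Cons red_append_red_mid[of "a @ g", simplified])
  also have "\<dots> = red (a @ alt_word g c ps)"
    using assms red_append_red_right[of a "g @ finv g @ alt_word g c ps"]
    by (simp add: red_append_finv_cancel red_append_red_right)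
  also have "\<dots> = red (alt_word g (red (a @ c)) ps)"
    by (simp add: alt_word_def red_append_red_left)
  finally show ?thesis .
qed

lemma red_alt_word_merge_blocks:
  "red (alt_word g a ((b, []) # (b', c) # ps)) = red (alt_word g a ((red (b @ b'), c) # ps))"
proof -
  have "red (alt_word g a ((b, []) # (b', c) # ps))
      = red ((a @ g @ b) @ red (finv g @ g @ b' @ finv g @ alt_word g c ps))"
    by (simp only: red_append_red_right) (simp add: alt_word_Cons)
  also have "\<dots> = red ((a @ g) @ red (b @ b') @ finv g @ alt_word g c ps)"
    by (simp only: red_finv_append_cancel red_append_red_right red_append_red_mid) simp
  finally show ?thesis
    by (simp add: alt_word_Cons)
qed

lemma normal_form_trivial_first_block:
  assumes sg: "is_subgroup d H" and "a \<in> H" "red b = []" "blocks_in H c ps" "nontrivial_blocks ps"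
  shows "\<exists>a' ps'. blocks_in H a' ps' \<and> nontrivial_blocks ps' \<and>
    red (alt_word g a ((b, c) # ps)) = red (alt_word g a' ps')"
proof -
  have "c \<in> H"
    using assms(4) by (cases ps) (auto simp: blocks_in_def)
  then have "blocks_in H (red (a @ c)) ps"
    using assms(4) subgroup_red_append[OF sg \<open>a \<in> H\<close>] by (blast intro: blocks_in_replace_first)
  then show ?thesis
    using assms(5) red_alt_word_trivial_block[OF assms(3)] by blast
qed

lemma normal_form_prepend_block:
  assumes sg: "is_subgroup d H" and "a \<in> H" "b \<in> H" "blocks_in H c ps" "nontrivial_blocks ps"
  shows "\<exists>a' ps'. blocks_in H a' ps' \<and> nontrivial_blocks ps' \<and>
    red (alt_word g a ((b, c) # ps)) = red (alt_word g a' ps')"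
proof -
  note trivial_first = normal_form_trivial_first_block[OF sg \<open>a \<in> H\<close>]
  consider (trivial) "b = []" | (nonempty) "b \<noteq> []" "c \<noteq> [] \<or> ps = []"
    | (merge) b' c' ps' where "b \<noteq> []" "c = []" "ps = (b', c') # ps'"
    by (metis list.exhaust prod.exhaust)
  then show ?thesis
  proof cases
    case trivial
    then show ?thesis using trivial_first assms(4,5) by simp
  next
    case nonempty
    then show ?thesis using assms by (intro exI[of _ a] exI[of _ "(b, c) # ps"]) auto
  next
    case merge
    have "red (b @ b') \<in> H"
      using merge assms(3,4) subgroup_red_append[OF sg] by simp
    show ?thesis
    proof (cases "red (b @ b') = []")
      case True
      then show ?thesis
        using trivial_first[of "red (b @ b')" c' ps'] merge assms(4,5) red_alt_word_merge_blocks by simp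
    next
      case False
      then show ?thesis
        using merge assms \<open>red (b @ b') \<in> H\<close> red_alt_word_merge_blocks
        by (intro exI[of _ a] exI[of _ "(red (b @ b'), c') # ps'"]) auto
    qed
  qed
qed

lemma alt_word_normal_form:
  assumes sg: "is_subgroup d H"
  shows "blocks_in H a ps \<Longrightarrow> \<exists>a' ps'. blocks_in H a' ps' \<and> nontrivial_blocks ps' \<and>
    red (alt_word g a ps) = red (alt_word g a' ps')"
proof (induction ps arbitrary: a)
  case Nil
  then show ?case by (intro exI[of _ a] exI[of _ "[]"]) auto
next
  case (Cons bc ps)
  obtain b c where bc: "bc = (b, c)" by (cases bc)
  with Cons.prems obtain c' ps' where IH: "blocks_in H c' ps'" "nontrivial_blocks ps'"
      "red (alt_word g c ps) = red (alt_word g c' ps')"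
    using Cons.IH by fastforce
  have "red (alt_word g a (bc # ps)) = red ((a @ g @ b @ finv g) @ red (alt_word g c ps))"
    by (simp only: red_append_red_right) (simp add: bc alt_word_Cons)
  also have "\<dots> = red (alt_word g a ((b, c') # ps'))"
    by (simp only: IH(3) red_append_red_right) (simp add: alt_word_Cons)
  finally show ?case
    using normal_form_prepend_block[OF sg _ _ IH(1,2)] Cons.prems bc by auto
qed

section \<open>Length of normal forms\<close>

definition blocks_length :: "letter list \<Rightarrow> (letter list \<times> letter list) list \<Rightarrow> nat" where
  "blocks_length a ps = length a + sum_list (map (\<lambda>(b, c). length b + length c) ps)"

lemma blocks_length_Nil[simp]: "blocks_length a [] = length a"
  by (simp add: blocks_length_def)

lemma blocks_length_Cons[simp]:
  "blocks_length a ((b, c) # ps) = length a + length b + blocks_length c ps"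
  by (simp add: blocks_length_def)

lemma red_append_red_alternate: "red (u @ x @ v @ y @ w) = red (red u @ x @ red v @ y @ red w)"
  by (metis append_assoc red_append_red_left red_append_red_mid red_append_red_right)

lemma nth_length_append_hd: "w = u @ v @ x \<Longrightarrow> v \<noteq> [] \<Longrightarrow> w ! length u = hd v"
  by (simp add: nth_append hd_conv_nth)

lemma append_conj_regroup:
  "w = u @ v @ finv y \<Longrightarrow> x @ w @ b @ finv w @ t = (x @ u) @ v @ (finv y @ b @ y) @ finv v @ (finv u @ t)"
  by simp

lemma finv_eq_append3: "w = u @ v @ finv x \<Longrightarrow> finv w = x @ finv v @ finv u"
  by simp

lemma reduced_block_word:
  assumes "reduced u" "reduced y" "reduced v" "reduced w" "y \<noteq> []" "v \<noteq> []"
    "u \<noteq> [] \<Longrightarrow> last u \<noteq> inv_letter (hd y)" "hd v \<noteq> inv_letter (last y)" "last v \<noteq> last y"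
    "w \<noteq> [] \<Longrightarrow> hd w \<noteq> hd y"
  shows "reduced (u @ y @ v @ finv y @ w)"
  using assms by (auto simp: reduced_append_iff hd_finv last_finv)

abbreviation inv_terminal_segment :: "letter list set \<Rightarrow> letter list \<Rightarrow> letter list" where
  "inv_terminal_segment H g \<equiv> take (k2 H g) (finv g)"

abbreviation join_segment :: "letter list set \<Rightarrow> letter list \<Rightarrow> letter list" where
  "join_segment H g \<equiv> drop (k1 H g) (take (length g - k2 H g) g)"

context
  fixes d :: nat and H :: "letter list set" and g :: "letter list"
  assumes sg: "is_subgroup d H" and rg: "reduced g" and adm: "admissible_connector H g"
begin

abbreviation "p \<equiv> initial_segment H g"
abbreviation "q \<equiv> inv_terminal_segment H g"
abbreviation "j \<equiv> join_segment H g"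

lemma k1_less_length: "k1 H g < length g"
  using adm by (simp add: admissible_connector_def)

lemma k1_finv_less_length: "k1 H (finv g) < length (finv g)"
  using adm by (simp add: admissible_connector_def k2_eq_k1_finv)

lemma length_initial_segment: "length p = k1 H g"
  using k1_less_length by simp

lemma length_inv_terminal_segment: "length q = k2 H g"
  using adm by (simp add: admissible_connector_def)

lemma length_join_segment: "length j = join_length H g"
  using adm by (simp add: admissible_connector_def join_length_def)

lemma join_segment_neq_Nil: "j \<noteq> []"
  using adm by (auto simp: admissible_connector_def)

lemma reduced_join_segment: "reduced j"
  using rg by (simp add: reduced_take reduced_drop)

text \<open>p, j and q are abbreviations containing g, so this equation loops as a rewrite rule; it is
  only used to instantiate the g-free lemmas above.\<close>
lemma connector_decomp: "g = p @ j @ finv q"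
proof -
  have "k1 H g \<le> length g - k2 H g"
    using adm by (simp add: admissible_connector_def)
  then have "p @ j = take (length g - k2 H g) g"
    by (metis append_take_drop_id min.absorb1 take_take)
  then show ?thesis
    by (metis append_assoc append_take_drop_id finv_take_finv)
qed

lemma hd_join_segment: "hd j = g ! k1 H g"
proof -
  have "g ! length p = hd j"
    by (rule nth_length_append_hd[OF connector_decomp join_segment_neq_Nil])
  then show ?thesis
    by (simp only: length_initial_segment)
qed

lemma nth_finv_k1_finv: "finv g ! k1 H (finv g) = inv_letter (last j)"
proof -
  have "finv g ! length q = hd (finv j)"
    using finv_eq_append3[OF connector_decomp] join_segment_neq_Nil
    by (intro nth_length_append_hd) simp_all
  then show ?thesis
    using join_segment_neq_Nil length_inv_terminal_segment by (simp add: hd_finv k2_eq_k1_finv)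
qed

lemma conj_initial_segment_no_cancel:
  assumes "a \<in> H" "a \<noteq> []"
  shows "red (finv p @ a @ p) \<noteq> []" "hd (red (finv p @ a @ p)) \<noteq> hd j"
    "last (red (finv p @ a @ p)) \<noteq> inv_letter (hd j)"
  using red_conj_neq_Nil[OF sg assms]
    hd_red_conj_initial_segment_neq[OF sg rg k1_less_length assms(1)]
    last_red_conj_initial_segment_neq[OF sg rg k1_less_length assms(1)]
  by (simp_all add: hd_join_segment)

lemma conj_inv_terminal_segment_no_cancel:
  assumes "b \<in> H" "b \<noteq> []"
  shows "red (finv q @ b @ q) \<noteq> []" "hd (red (finv q @ b @ q)) \<noteq> inv_letter (last j)"
    "last (red (finv q @ b @ q)) \<noteq> last j"
  using red_conj_neq_Nil[OF sg assms]
    hd_red_conj_initial_segment_neq[OF sg _ k1_finv_less_length assms(1)]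
    last_red_conj_initial_segment_neq[OF sg _ k1_finv_less_length assms(1)]
  by (simp_all add: rg nth_finv_k1_finv k2_eq_k1_finv)

lemma red_block_eq:
  assumes "b \<in> H" "b \<noteq> []"
    and "red (x @ p) \<noteq> [] \<Longrightarrow> last (red (x @ p)) \<noteq> inv_letter (hd j)"
    and "red (finv p @ t) \<noteq> [] \<Longrightarrow> hd (red (finv p @ t)) \<noteq> hd j"
  shows "red (x @ g @ b @ finv g @ t)
    = red (x @ p) @ j @ red (finv q @ b @ q) @ finv j @ red (finv p @ t)"
proof -
  have "red (x @ g @ b @ finv g @ t)
      = red (red (x @ p) @ j @ red (finv q @ b @ q) @ finv j @ red (finv p @ t))"
    unfolding append_conj_regroup[OF connector_decomp] by (rule red_append_red_alternate)
  also have "\<dots> = red (x @ p) @ j @ red (finv q @ b @ q) @ finv j @ red (finv p @ t)"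
    using conj_inv_terminal_segment_no_cancel[OF assms(1,2)] assms(3,4)
    by (intro red_reduced reduced_block_word reduced_red reduced_join_segment join_segment_neq_Nil)
      simp_all
  finally show ?thesis .
qed

lemma red_finv_initial_segment_alt_word:
  "blocks_in H a ps \<Longrightarrow> nontrivial_blocks ps \<Longrightarrow> a \<noteq> [] \<or> ps = [] \<Longrightarrow>
    (red (finv p @ alt_word g a ps) \<noteq> [] \<longrightarrow> hd (red (finv p @ alt_word g a ps)) \<noteq> hd j) \<and>
    2 * length ps * join_length H g \<le> length (red (finv p @ alt_word g a ps)) \<and>
    blocks_length a ps + 2 * length ps * join_length H g
      \<le> length (red (finv p @ alt_word g a ps)) + k1 H g + 2 * length ps * (k1 H g + k2 H g)"
proof (induction ps arbitrary: a)
  case Nil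
  then show ?case
    using hd_red_finv_initial_segment_append_neq[OF sg rg k1_less_length]
      length_le_red_finv_append[OF sg, of a p] length_initial_segment
    by (simp add: hd_join_segment)
next
  case (Cons bc ps)
  obtain b c where bc: "bc = (b, c)" by (cases bc)
  with Cons.prems have a: "a \<in> H" "a \<noteq> []" and b: "b \<in> H" "b \<noteq> []"
    and tail: "blocks_in H c ps" "nontrivial_blocks ps" "c \<noteq> [] \<or> ps = []"
    by auto
  define A where "A = red (finv p @ a @ p)"
  define B where "B = red (finv q @ b @ q)"
  define V where "V = red (finv p @ alt_word g c ps)"
  have IH: "V \<noteq> [] \<Longrightarrow> hd V \<noteq> hd j" "2 * length ps * join_length H g \<le> length V"
    "blocks_length c ps + 2 * length ps * join_length H g
      \<le> length V + k1 H g + 2 * length ps * (k1 H g + k2 H g)"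
    using Cons.IH[OF tail] by (simp_all add: V_def)
  have eq: "red (finv p @ alt_word g a (bc # ps)) = A @ j @ B @ finv j @ V"
    using red_block_eq[OF b, of "finv p @ a" "alt_word g c ps"] conj_initial_segment_no_cancel[OF a] IH(1)
    by (simp add: bc alt_word_Cons A_def B_def V_def)
  then have "red (finv p @ alt_word g a (bc # ps)) \<noteq> [] \<longrightarrow>
      hd (red (finv p @ alt_word g a (bc # ps))) \<noteq> hd j"
    using conj_initial_segment_no_cancel[OF a] by (simp add: A_def)
  moreover have "length (red (finv p @ alt_word g a (bc # ps)))
      = length A + join_length H g + length B + join_length H g + length V"
    by (simp only: eq length_append length_finv length_join_segment add.assoc)
  moreover have "length a \<le> length A + 2 * k1 H g"
    using length_le_red_conj[OF sg a(1), of p] by (simp add: A_def length_initial_segment)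
  moreover have "length b \<le> length B + 2 * k2 H g"
    using length_le_red_conj[OF sg b(1), of q] by (simp add: B_def length_inv_terminal_segment)
  ultimately show ?case
    using IH(2,3) by (simp add: bc algebra_simps del: length_drop length_take)
qed

lemma length_red_alt_word_ge:
  assumes "blocks_in H a ps" "nontrivial_blocks ps"
  shows "2 * length ps * join_length H g \<le> length (red (alt_word g a ps)) \<and>
    blocks_length a ps + 2 * length ps * join_length H g
      \<le> length (red (alt_word g a ps)) + 2 * length ps * (k1 H g + k2 H g)"
proof (cases ps)
  case Nil
  then show ?thesis
    using assms subgroup_red_eq[OF sg] by simp
next
  case (Cons bc ps')
  obtain b c where bc: "bc = (b, c)" by (cases bc)
  with Cons assms have a: "a \<in> H" and b: "b \<in> H" "b \<noteq> []"
    and tail: "blocks_in H c ps'" "nontrivial_blocks ps'" "c \<noteq> [] \<or> ps' = []"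
    by auto
  define A where "A = red (a @ p)"
  define B where "B = red (finv q @ b @ q)"
  define V where "V = red (finv p @ alt_word g c ps')"
  note IH = red_finv_initial_segment_alt_word[OF tail, folded V_def]
  have eq: "red (alt_word g a ps) = A @ j @ B @ finv j @ V"
    using red_block_eq[OF b, of a "alt_word g c ps'"] IH
      last_red_append_initial_segment_neq[OF sg rg k1_less_length a]
    by (simp add: Cons bc alt_word_Cons A_def B_def V_def hd_join_segment)
  have "length (red (alt_word g a ps))
      = length A + join_length H g + length B + join_length H g + length V"
    by (simp only: eq length_append length_finv length_join_segment add.assoc)
  moreover have "length a \<le> length A + k1 H g"
    using length_le_red_append[OF sg a, of p] by (simp add: A_def length_initial_segment)
  moreover have "length b \<le> length B + 2 * k2 H g"
    using length_le_red_conj[OF sg b(1), of q] by (simp add: B_def length_inv_terminal_segment)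
  ultimately show ?thesis
    using IH by (simp add: Cons bc algebra_simps)
qed

end

section \<open>Counting\<close>

definition bounded_tuples :: "letter list set \<Rightarrow> nat list \<Rightarrow> letter list list set" where
  "bounded_tuples H \<alpha> = {l. list_all2 (\<lambda>\<gamma> k. \<gamma> \<in> H \<and> length \<gamma> \<le> k) l \<alpha>}"

lemma card_bounded_tuples:
  assumes "\<And>k. finite {h \<in> H. length h \<le> k}"
  shows "finite (bounded_tuples H \<alpha>) \<and> card (bounded_tuples H \<alpha>) = prod_list (map (growth H) \<alpha>)"
proof (induction \<alpha>)
  case Nil
  have "bounded_tuples H [] = {[]}"
    by (auto simp: bounded_tuples_def)
  then show ?case by simp
next
  case (Cons k \<alpha>)
  have eq: "bounded_tuples H (k # \<alpha>) = (\<lambda>(x, l). x # l) ` ({h \<in> H. length h \<le> k} \<times> bounded_tuples H \<alpha>)"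
    by (auto simp: bounded_tuples_def list_all2_Cons2)
  have "inj_on (\<lambda>(x, l). x # l) ({h \<in> H. length h \<le> k} \<times> bounded_tuples H \<alpha>)"
    by (auto simp: inj_on_def)
  then have "card (bounded_tuples H (k # \<alpha>)) = card {h \<in> H. length h \<le> k} * card (bounded_tuples H \<alpha>)"
    by (simp only: eq card_image card_cartesian_product)
  then show ?case
    using Cons assms[of k] eq by (simp add: growth_def)
qed

lemma card_le_sum_bounded_tuples:
  assumes "\<And>k. finite {h \<in> H. length h \<le> k}" "finite I" "\<And>i. i \<in> I \<Longrightarrow> finite (A i)"
    and "S \<subseteq> (\<Union>i\<in>I. \<Union>\<alpha>\<in>A i. f ` bounded_tuples H \<alpha>)"
  shows "card S \<le> (\<Sum>i\<in>I. \<Sum>\<alpha>\<in>A i. prod_list (map (growth H) \<alpha>))"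
proof -
  have fin: "finite (bounded_tuples H \<alpha>)" for \<alpha>
    using card_bounded_tuples[OF assms(1)] by blast
  have "card S \<le> card (\<Union>i\<in>I. \<Union>\<alpha>\<in>A i. f ` bounded_tuples H \<alpha>)"
    using assms(2-4) fin by (intro card_mono) auto
  also have "\<dots> \<le> (\<Sum>i\<in>I. card (\<Union>\<alpha>\<in>A i. f ` bounded_tuples H \<alpha>))"
    by (rule card_UN_le[OF assms(2)])
  also have "\<dots> \<le> (\<Sum>i\<in>I. \<Sum>\<alpha>\<in>A i. card (f ` bounded_tuples H \<alpha>))"
    using assms(3) by (intro sum_mono card_UN_le)
  also have "\<dots> \<le> (\<Sum>i\<in>I. \<Sum>\<alpha>\<in>A i. card (bounded_tuples H \<alpha>))"
    by (intro sum_mono card_image_le fin)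
  also have "\<dots> = (\<Sum>i\<in>I. \<Sum>\<alpha>\<in>A i. prod_list (map (growth H) \<alpha>))"
    using card_bounded_tuples[OF assms(1)] by simp
  finally show ?thesis .
qed

definition compositions :: "nat \<Rightarrow> int \<Rightarrow> nat list set" where
  "compositions k m = {\<alpha>. length \<alpha> = k \<and> int (sum_list \<alpha>) = m}"

lemma finite_compositions: "finite (compositions k m)"
proof (rule finite_subset)
  show "compositions k m \<subseteq> {\<alpha>. set \<alpha> \<subseteq> {..nat m} \<and> length \<alpha> = k}"
    using member_le_sum_list by (fastforce simp: compositions_def)
  show "finite {\<alpha>. set \<alpha> \<subseteq> {..nat m} \<and> length \<alpha> = k}"
    by (rule finite_lists_length_eq) simp
qed

lemma bounded_tuples_composition:
  assumes "set (a # l) \<subseteq> H" "int (sum_list (map length (a # l))) \<le> m"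
  shows "\<exists>\<alpha> \<in> compositions (Suc (length l)) m. a # l \<in> bounded_tuples H \<alpha>"
proof
  let ?\<alpha> = "(length a + (nat m - sum_list (map length (a # l)))) # map length l"
  show "?\<alpha> \<in> compositions (Suc (length l)) m"
    using assms(2) by (simp add: compositions_def)
  show "a # l \<in> bounded_tuples H ?\<alpha>"
    using assms(1) by (auto simp: bounded_tuples_def list_all2_map2 list_all2_same)
qed

definition flat_pairs :: "('a \<times> 'a) list \<Rightarrow> 'a list" where
  "flat_pairs ps = concat (map (\<lambda>(b, c). [b, c]) ps)"

fun pairs :: "'a list \<Rightarrow> ('a \<times> 'a) list" where
  "pairs (b # c # l) = (b, c) # pairs l"
| "pairs _ = []"

lemma pairs_flat_pairs[simp]: "pairs (flat_pairs ps) = ps"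
  by (induction ps) (auto simp: flat_pairs_def)

lemma length_flat_pairs[simp]: "length (flat_pairs ps) = 2 * length ps"
  by (induction ps) (auto simp: flat_pairs_def)

lemma blocks_length_eq_sum_list: "blocks_length a ps = sum_list (map length (a # flat_pairs ps))"
  by (induction ps arbitrary: a) (auto simp: flat_pairs_def)

lemma set_flat_pairs_subset: "blocks_in H a ps \<Longrightarrow> set (a # flat_pairs ps) \<subseteq> H"
  by (auto simp: flat_pairs_def blocks_in_def)

definition tuple_word :: "letter list \<Rightarrow> letter list list \<Rightarrow> letter list" where
  "tuple_word g l = red (alt_word g (hd l) (pairs (tl l)))"

lemma ball_generated_conj_subset:
  assumes sg: "is_subgroup d H" and gF: "g \<in> free_group d" and adm: "admissible_connector H g"
  shows "{h \<in> generated d (H \<union> {fmult (fmult g h) (finv g) | h. h \<in> H}). length h \<le> R}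
    \<subseteq> (\<Union>i\<in>{0..R div (2 * join_length H g)}.
        \<Union>\<alpha>\<in>compositions (2 * i + 1) (int R + 2 * int i * (int (length g) - 2 * int (join_length H g))).
          tuple_word g ` bounded_tuples H \<alpha>)"
proof
  fix h assume "h \<in> {h \<in> generated d (H \<union> {fmult (fmult g h) (finv g) | h. h \<in> H}). length h \<le> R}"
  then have "h \<in> alt_words H g" and hR: "length h \<le> R"
    using generated_conj_subset_alt_words[OF sg gF] by auto
  then obtain a ps where ps: "blocks_in H a ps" "nontrivial_blocks ps" "h = red (alt_word g a ps)"
    using alt_word_normal_form[OF sg] unfolding alt_words_def by blast
  define n where "n = length ps"
  define J where "J = join_length H g"
  have rg: "reduced g"
    using gF by (simp add: free_group_def)
  have bounds: "2 * n * J \<le> length h"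
      "blocks_length a ps + 2 * n * J \<le> length h + 2 * n * (k1 H g + k2 H g)"
    using length_red_alt_word_ge[OF sg rg adm ps(1,2)] by (simp_all add: ps(3) n_def J_def)
  have "0 < J" and g_len: "length g = k1 H g + k2 H g + J"
    using adm by (auto simp: admissible_connector_def join_length_def J_def)
  moreover have "n * (2 * J) \<le> R"
    using bounds(1) hR by (simp add: mult.assoc mult.left_commute)
  ultimately have "n \<le> R div (2 * J)"
    by (simp add: less_eq_div_iff_mult_less_eq)
  have "int (blocks_length a ps + 2 * n * J) \<le> int (R + 2 * n * (k1 H g + k2 H g))"
    using bounds(2) hR by linarith
  then have "int (sum_list (map length (a # flat_pairs ps)))
      \<le> int R + 2 * int n * (int (length g) - 2 * int J)"
    unfolding g_len blocks_length_eq_sum_list by (simp add: algebra_simps)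
  then obtain \<alpha> where "\<alpha> \<in> compositions (2 * n + 1) (int R + 2 * int n * (int (length g) - 2 * int J))"
      "a # flat_pairs ps \<in> bounded_tuples H \<alpha>"
    using bounded_tuples_composition[OF set_flat_pairs_subset[OF ps(1)]] by (auto simp: n_def)
  moreover have "h = tuple_word g (a # flat_pairs ps)"
    by (simp add: tuple_word_def ps(3))
  ultimately show "h \<in> (\<Union>i\<in>{0..R div (2 * join_length H g)}.
        \<Union>\<alpha>\<in>compositions (2 * i + 1) (int R + 2 * int i * (int (length g) - 2 * int (join_length H g))).
          tuple_word g ` bounded_tuples H \<alpha>)"
    using \<open>n \<le> R div (2 * J)\<close> unfolding J_def by fastforce
qed

theorem lemma2p10:
  fixes d :: nat and \<Gamma> :: "letter list set" and g :: "letter list" and R :: nat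
  assumes "is_subgroup d \<Gamma>" and "fin_gen_subgroup d \<Gamma>"
    and "g \<in> free_group d"
    and "admissible_connector \<Gamma> g"
  shows "growth (generated d (\<Gamma> \<union> {fmult (fmult g h) (finv g) | h. h \<in> \<Gamma>})) R
    \<le> (\<Sum>i = 0..R div (2 * join_length \<Gamma> g).
         \<Sum>\<alpha>\<in>{\<alpha> :: nat list. length \<alpha> = 2 * i + 1 \<and>
               int (sum_list \<alpha>) = int R + 2 * int i * (int (length g) - 2 * int (join_length \<Gamma> g))}.
           prod_list (map (growth \<Gamma>) \<alpha>))"
proof -
  have "card {h \<in> generated d (\<Gamma> \<union> {fmult (fmult g h) (finv g) | h. h \<in> \<Gamma>}). length h \<le> R}
    \<le> (\<Sum>i = 0..R div (2 * join_length \<Gamma> g).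
         \<Sum>\<alpha>\<in>compositions (2 * i + 1) (int R + 2 * int i * (int (length g) - 2 * int (join_length \<Gamma> g))).
           prod_list (map (growth \<Gamma>) \<alpha>))"
    by (rule card_le_sum_bounded_tuples[OF finite_subgroup_ball[OF assms(1)] finite_atLeastAtMost
          finite_compositions ball_generated_conj_subset[OF assms(1,3,4)]])
  then show ?thesis
    by (simp add: growth_def compositions_def)
qed

end
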